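(* Let $(M_1,f_1,g_1)$ and $(M_2,f_2,g_2)$ be $(m,n)$-hypermodules over a commutative Krasner $(m,n)$-hyperring $(R,f',g')$ with scalar identity $1$, let $h:M_1\to M_2$ be an epimorphism, and let $\phi_1:\mathcal{SH}(M_1)\to\mathcal{SH}(M_1)\cup\{\varnothing\}$ and $\phi_2:\mathcal{SH}(M_2)\to\mathcal{SH}(M_2)\cup\{\varnothing\}$ be functions. Then: (1) if $Q_2$ is an $n$-ary $\phi_2$-classical prime subhypermodule of $M_2$ with $\phi_1(h^{-1}(Q_2))=h^{-1}(\phi_2(Q_2))$, then $h^{-1}(Q_2)$ is an $n$-ary $\phi_1$-classical prime subhypermodule of $M_1$; (2) if $Q_1$ is an $n$-ary $\phi_1$-classical prime subhypermodule of $M_1$ with $\mathrm{Ker}(h)\subseteq Q_1$ and $\phi_2(h(Q_1))=h(\phi_1(Q_1))$, then $h(Q_1)$ is an $n$-ary $\phi_2$-classical prime subhypermodule of $M_2$.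
   Context: A commutative Krasner $(m,n)$-hyperring with scalar identity $1$ is a triple $(R,f',g')$ where $(R,f')$ is a canonical $m$-ary hypergroup with zero $0$, $(R,g')$ is a commutative $n$-ary semigroup, $g'$ is distributive over $f'$, $0$ is a zero element for $g'$, and $g'(x,1^{(n-1)})=x$. Notation: $x_i^j$ denotes $x_i,\dots,x_j$ and $x^{(k)}$ denotes $x$ repeated $k$ times. An $(m,n)$-hypermodule over $R$ is a triple $(M,f,g)$ with $(M,f)$ a canonical $m$-ary hypergroup with zero $0$ and $g:R^{n-1}\times M\to P^*(M)$ satisfying: $g(r_1^{n-1},f(x_1^m))=f(g(r_1^{n-1},x_1),\dots,g(r_1^{n-1},x_m))$; $g(r_1^{i-1},f'(s_1^m),r_{i+1}^{n-1},x)=f(g(r_1^{i-1},s_1,r_{i+1}^{n-1},x),\dots,g(r_1^{i-1},s_m,r_{i+1}^{n-1},x))$; $g(r_1^{i-1},g'(r_i^{i+n-1}),r_{i+n}^{2n-2},x)=g(r_1^{n-1},g(r_n^{2n-2},x))$; $g(r_1^{i-1},0,r_{i+1}^{n-1},x)=\{0\}$; moreover $g(1^{(n-1)},a)=\{a\}$. A subhypermodule is a nonempty $N\subseteq M$ with $(N,f)$ an $m$-ary subhypergroup and $g(R^{(n-1)},N)\subseteq N$; $\mathcal{SH}(M)$ is the set of subhypermodules of $M$. Given $\phi:\mathcal{SH}(M)\to\mathcal{SH}(M)\cup\{\varnothing\}$, a proper subhypermodule $Q$ of $M$ is $n$-ary $\phi$-classical prime if $g(r_1^{n-1},a)\subseteq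 Q\setminus\phi(Q)$ ($r_i\in R$, $a\in M$) implies $g(r_i,1^{(n-2)},a)\subseteq Q$ for some $1\le i\le n-1$. A homomorphism $h:M_1\to M_2$ satisfies $h(f_1(a_1^m))=f_2(h(a_1),\dots,h(a_m))$ and $h(g_1(r_1^{n-1},a))=g_2(r_1^{n-1},h(a))$; an epimorphism is a surjective homomorphism; $\mathrm{Ker}(h)=\{a\in M_1:h(a)=0\}$. *)

theory Defs
  imports Main "HOL-Library.Multiset"
begin

text \<open>Hyperoperations of arity k are modelled as functions on lists (applied to lists
of length k) with values in sets; the underlying sets are whole types.\<close>

definition sgl :: "'a list \<Rightarrow> 'a set list" where
  "sgl xs = map (\<lambda>x. {x}) xs"

definition hlift :: "('a list \<Rightarrow> 'a set) \<Rightarrow> 'a set list \<Rightarrow> 'a set" where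
  "hlift f As = \<Union> {f xs | xs. list_all2 (\<in>) xs As}"

definition nary_hyperop :: "nat \<Rightarrow> ('a list \<Rightarrow> 'a set) \<Rightarrow> bool" where
  "nary_hyperop m f \<longleftrightarrow> (\<forall>xs. length xs = m \<longrightarrow> f xs \<noteq> {})"

definition nary_hassoc :: "nat \<Rightarrow> ('a list \<Rightarrow> 'a set) \<Rightarrow> bool" where
  "nary_hassoc m f \<longleftrightarrow> (\<forall>xs i j. length xs = 2*m - 1 \<longrightarrow> i < m \<longrightarrow> j < m \<longrightarrow>
      hlift f (sgl (take i xs) @ [f (take m (drop i xs))] @ sgl (drop (i+m) xs)) =
      hlift f (sgl (take j xs) @ [f (take m (drop j xs))] @ sgl (drop (j+m) xs)))"

definition nary_reproducible :: "nat \<Rightarrow> ('a list \<Rightarrow> 'a set) \<Rightarrow> 'a set \<Rightarrow> bool" where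
  "nary_reproducible m f H \<longleftrightarrow> (\<forall>xs i. length xs = m \<longrightarrow> set xs \<subseteq> H \<longrightarrow> i < m \<longrightarrow>
      hlift f ((sgl xs)[i := H]) = H)"

definition nary_hypergroup :: "nat \<Rightarrow> ('a list \<Rightarrow> 'a set) \<Rightarrow> bool" where
  "nary_hypergroup m f \<longleftrightarrow> nary_hyperop m f \<and> nary_hassoc m f \<and> nary_reproducible m f UNIV"

definition nary_hcomm :: "nat \<Rightarrow> ('a list \<Rightarrow> 'a set) \<Rightarrow> bool" where
  "nary_hcomm m f \<longleftrightarrow> (\<forall>xs ys. length xs = m \<longrightarrow> mset xs = mset ys \<longrightarrow> f xs = f ys)"

definition hscalar_identity :: "nat \<Rightarrow> ('a list \<Rightarrow> 'a set) \<Rightarrow> 'a \<Rightarrow> bool" where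
  "hscalar_identity m f e \<longleftrightarrow> (\<forall>x. f (x # replicate (m-1) e) = {x})"

definition hinv :: "nat \<Rightarrow> ('a list \<Rightarrow> 'a set) \<Rightarrow> 'a \<Rightarrow> 'a \<Rightarrow> 'a" where
  "hinv m f z x = (THE y. z \<in> f (x # y # replicate (m-2) z))"

definition canonical_hypergroup :: "nat \<Rightarrow> ('a list \<Rightarrow> 'a set) \<Rightarrow> 'a \<Rightarrow> bool" where
  "canonical_hypergroup m f z \<longleftrightarrow>
     nary_hypergroup m f \<and> nary_hcomm m f \<and>
     hscalar_identity m f z \<and> (\<forall>e. hscalar_identity m f e \<longrightarrow> e = z) \<and>
     (\<forall>x. \<exists>!y. z \<in> f (x # y # replicate (m-2) z)) \<and>
     (\<forall>x xs i. length xs = m \<longrightarrow> x \<in> f xs \<longrightarrow> i < m \<longrightarrow>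
        xs ! i \<in> f (x # map (hinv m f z) (take i xs @ drop (Suc i) xs)))"

definition nary_semigroup :: "nat \<Rightarrow> ('a list \<Rightarrow> 'a) \<Rightarrow> bool" where
  "nary_semigroup n g \<longleftrightarrow> (\<forall>xs i j. length xs = 2*n - 1 \<longrightarrow> i < n \<longrightarrow> j < n \<longrightarrow>
      g (take i xs @ [g (take n (drop i xs))] @ drop (i+n) xs) =
      g (take j xs @ [g (take n (drop j xs))] @ drop (j+n) xs))"

definition nary_comm :: "nat \<Rightarrow> ('a list \<Rightarrow> 'a) \<Rightarrow> bool" where
  "nary_comm n g \<longleftrightarrow> (\<forall>xs ys. length xs = n \<longrightarrow> mset xs = mset ys \<longrightarrow> g xs = g ys)"

definition krasner_hyperring ::
  "nat \<Rightarrow> nat \<Rightarrow> ('r list \<Rightarrow> 'r set) \<Rightarrow> ('r list \<Rightarrow> 'r) \<Rightarrow> 'r \<Rightarrow> 'r \<Rightarrow> bool" where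
  "krasner_hyperring m n f' g' z one \<longleftrightarrow>
     canonical_hypergroup m f' z \<and> nary_semigroup n g' \<and> nary_comm n g' \<and>
     (\<forall>xs ys i. length xs = n \<longrightarrow> length ys = m \<longrightarrow> i < n \<longrightarrow>
        (\<Union>y\<in>f' ys. {g' (xs[i := y])}) = hlift f' (map (\<lambda>y. {g' (xs[i := y])}) ys)) \<and>
     (\<forall>xs i. length xs = n \<longrightarrow> i < n \<longrightarrow> g' (xs[i := z]) = z) \<and>
     (\<forall>x. g' (x # replicate (n-1) one) = x)"

definition hypermodule ::
  "nat \<Rightarrow> nat \<Rightarrow> ('r list \<Rightarrow> 'r set) \<Rightarrow> ('r list \<Rightarrow> 'r) \<Rightarrow> 'r \<Rightarrow> 'r \<Rightarrow>
   ('a list \<Rightarrow> 'a set) \<Rightarrow> ('r list \<Rightarrow> 'a \<Rightarrow> 'a set) \<Rightarrow> 'a \<Rightarrow> bool" where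
  "hypermodule m n f' g' z' one f g z \<longleftrightarrow>
     canonical_hypergroup m f z \<and>
     (\<forall>rs x. length rs = n - 1 \<longrightarrow> g rs x \<noteq> {}) \<and>
     (\<forall>rs xs. length rs = n - 1 \<longrightarrow> length xs = m \<longrightarrow>
        (\<Union>y\<in>f xs. g rs y) = hlift f (map (g rs) xs)) \<and>
     (\<forall>rs ss i x. length rs = n - 1 \<longrightarrow> length ss = m \<longrightarrow> i < n - 1 \<longrightarrow>
        (\<Union>s\<in>f' ss. g (rs[i := s]) x) = hlift f (map (\<lambda>s. g (rs[i := s]) x) ss)) \<and>
     (\<forall>rs i x. length rs = 2*n - 2 \<longrightarrow> i < n - 1 \<longrightarrow>
        g (take i rs @ [g' (take n (drop i rs))] @ drop (i+n) rs) x =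
        (\<Union>y\<in>g (drop (n-1) rs) x. g (take (n-1) rs) y)) \<and>
     (\<forall>rs i x. length rs = n - 1 \<longrightarrow> i < n - 1 \<longrightarrow> g (rs[i := z']) x = {z}) \<and>
     (\<forall>a. g (replicate (n-1) one) a = {a})"

definition subhypermodule ::
  "nat \<Rightarrow> nat \<Rightarrow> ('a list \<Rightarrow> 'a set) \<Rightarrow> ('r list \<Rightarrow> 'a \<Rightarrow> 'a set) \<Rightarrow> 'a set \<Rightarrow> bool" where
  "subhypermodule m n f g N \<longleftrightarrow> N \<noteq> {} \<and>
     (\<forall>xs. length xs = m \<longrightarrow> set xs \<subseteq> N \<longrightarrow> f xs \<subseteq> N) \<and>
     nary_reproducible m f N \<and>
     (\<forall>rs a. length rs = n - 1 \<longrightarrow> a \<in> N \<longrightarrow> g rs a \<subseteq> N)"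

definition phi_function ::
  "nat \<Rightarrow> nat \<Rightarrow> ('a list \<Rightarrow> 'a set) \<Rightarrow> ('r list \<Rightarrow> 'a \<Rightarrow> 'a set) \<Rightarrow> ('a set \<Rightarrow> 'a set) \<Rightarrow> bool" where
  "phi_function m n f g \<phi> \<longleftrightarrow>
     (\<forall>N. subhypermodule m n f g N \<longrightarrow> subhypermodule m n f g (\<phi> N) \<or> \<phi> N = {})"

definition phi_classical_prime ::
  "nat \<Rightarrow> nat \<Rightarrow> 'r \<Rightarrow> ('a list \<Rightarrow> 'a set) \<Rightarrow> ('r list \<Rightarrow> 'a \<Rightarrow> 'a set) \<Rightarrow>
   ('a set \<Rightarrow> 'a set) \<Rightarrow> 'a set \<Rightarrow> bool" where
  "phi_classical_prime m n one f g \<phi> Q \<longleftrightarrow>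
     subhypermodule m n f g Q \<and> Q \<noteq> UNIV \<and>
     (\<forall>rs a. length rs = n - 1 \<longrightarrow> g rs a \<subseteq> Q - \<phi> Q \<longrightarrow>
        (\<exists>i < n - 1. g ((rs ! i) # replicate (n-2) one) a \<subseteq> Q))"

definition hm_homomorphism ::
  "nat \<Rightarrow> nat \<Rightarrow> ('a list \<Rightarrow> 'a set) \<Rightarrow> ('r list \<Rightarrow> 'a \<Rightarrow> 'a set) \<Rightarrow>
   ('b list \<Rightarrow> 'b set) \<Rightarrow> ('r list \<Rightarrow> 'b \<Rightarrow> 'b set) \<Rightarrow> ('a \<Rightarrow> 'b) \<Rightarrow> bool" where
  "hm_homomorphism m n f1 g1 f2 g2 h \<longleftrightarrow>
     (\<forall>xs. length xs = m \<longrightarrow> h ` f1 xs = f2 (map h xs)) \<and>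
     (\<forall>rs a. length rs = n - 1 \<longrightarrow> h ` g1 rs a = g2 rs (h a))"

definition hm_epimorphism ::
  "nat \<Rightarrow> nat \<Rightarrow> ('a list \<Rightarrow> 'a set) \<Rightarrow> ('r list \<Rightarrow> 'a \<Rightarrow> 'a set) \<Rightarrow>
   ('b list \<Rightarrow> 'b set) \<Rightarrow> ('r list \<Rightarrow> 'b \<Rightarrow> 'b set) \<Rightarrow> ('a \<Rightarrow> 'b) \<Rightarrow> bool" where
  "hm_epimorphism m n f1 g1 f2 g2 h \<longleftrightarrow> hm_homomorphism m n f1 g1 f2 g2 h \<and> surj h"

definition Ker :: "('a \<Rightarrow> 'b) \<Rightarrow> 'b \<Rightarrow> 'a set" where
  "Ker h z = {a. h a = z}"

end

theory Submission imports Defs begin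

(* A homomorphism h carries g1(r_1^{n-1}, a) onto g2(r_1^{n-1}, h a), so the condition defining a
   phi-classical prime passes to preimages under h, and to images provided Q1 is saturated,
   h^-1(h(Q1)) = Q1.  Saturation is where Ker h <= Q1 enters: if h c = h q with q in Q1, then h maps
   some d in f1(c, -q, 0, ..., 0) to 0, so d lies in Q1, and c is recovered from d by the
   cancellation law x in f(x_1^m) ==> x_i in f(x, -x_1, ..., -x_m) (x_i omitted) of canonical
   hypergroups.  The same cancellation, together with solvability of a in f(x_1, ..., y, ..., x_m)
   in the whole hypergroup, makes preimages and images of subhypermodules reproducible. *)

lemma list_all2_mem_sgl_update_iff:
  assumes "i < length xs"
  shows "list_all2 (\<in>) ys ((sgl xs)[i := A]) \<longleftrightarrow> (\<exists>y\<in>A. ys = xs[i := y])"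
proof
  assume ys: "list_all2 (\<in>) ys ((sgl xs)[i := A])"
  then have len: "length ys = length xs" by (simp add: list_all2_conv_all_nth sgl_def)
  have "ys = xs[i := ys ! i]"
  proof (rule nth_equalityI)
    fix j assume "j < length ys"
    then show "ys ! j = xs[i := ys ! i] ! j" using ys len assms
      by (cases "j = i") (auto simp: list_all2_conv_all_nth sgl_def nth_list_update)
  qed (simp add: len)
  moreover have "ys ! i \<in> A" using ys len assms by (auto simp: list_all2_conv_all_nth sgl_def)
  ultimately show "\<exists>y\<in>A. ys = xs[i := y]" by blast
next
  assume "\<exists>y\<in>A. ys = xs[i := y]"
  then show "list_all2 (\<in>) ys ((sgl xs)[i := A])" using assms
    by (auto simp: list_all2_conv_all_nth sgl_def nth_list_update)
qed

lemma hlift_sgl_update_iff: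
  assumes "i < length xs"
  shows "a \<in> hlift f ((sgl xs)[i := A]) \<longleftrightarrow> (\<exists>y\<in>A. a \<in> f (xs[i := y]))"
proof -
  have "a \<in> hlift f As \<longleftrightarrow> (\<exists>ys. list_all2 (\<in>) ys As \<and> a \<in> f ys)" for As
    unfolding hlift_def by auto
  then show ?thesis using list_all2_mem_sgl_update_iff[OF assms] by auto
qed

lemma nary_reproducibleD:
  assumes "nary_reproducible m f N" "length xs = m" "set xs \<subseteq> N" "i < m" "a \<in> N"
  shows "\<exists>y\<in>N. a \<in> f (xs[i := y])"
  using assms hlift_sgl_update_iff[of i xs a f N] unfolding nary_reproducible_def by auto

lemma nary_reproducibleI:
  assumes closed: "\<And>xs. length xs = m \<Longrightarrow> set xs \<subseteq> N \<Longrightarrow> f xs \<subseteq> N"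
    and solvable: "\<And>xs i a. length xs = m \<Longrightarrow> set xs \<subseteq> N \<Longrightarrow> i < m \<Longrightarrow> a \<in> N \<Longrightarrow>
      \<exists>y\<in>N. a \<in> f (xs[i := y])"
  shows "nary_reproducible m f N"
  unfolding nary_reproducible_def
proof (intro allI impI set_eqI iffI)
  fix xs i a assume xs: "length xs = m" "set xs \<subseteq> N" "i < m"
  {
    assume "a \<in> hlift f ((sgl xs)[i := N])"
    then obtain y where "y \<in> N" "a \<in> f (xs[i := y])"
      using hlift_sgl_update_iff[of i xs a f N] xs by auto
    moreover have "set (xs[i := y]) \<subseteq> N"
      using set_update_subset_insert[of xs i y] xs \<open>y \<in> N\<close> by blast
    ultimately show "a \<in> N" using closed[of "xs[i := y]"] xs by auto
  next
    assume "a \<in> N"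
    then show "a \<in> hlift f ((sgl xs)[i := N])"
      using solvable[OF xs] hlift_sgl_update_iff[of i xs a f N] xs by auto
  }
qed

lemma canonical_hypergroup_hinv_ex1:
  assumes "canonical_hypergroup m f z"
  shows "\<exists>!y. z \<in> f (x # y # replicate (m - 2) z)"
  using assms unfolding canonical_hypergroup_def by blast

lemma canonical_hypergroup_hinv:
  assumes "canonical_hypergroup m f z"
  shows "z \<in> f (x # hinv m f z x # replicate (m - 2) z)"
  unfolding hinv_def using canonical_hypergroup_hinv_ex1[OF assms] by (rule theI')

lemma canonical_hypergroup_hinv_unique:
  assumes "canonical_hypergroup m f z" "z \<in> f (x # y # replicate (m - 2) z)"
  shows "y = hinv m f z x"
  using canonical_hypergroup_hinv_ex1[OF assms(1)] canonical_hypergroup_hinv[OF assms(1)] assms(2)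
  by blast

lemma canonical_hypergroup_solvable:
  assumes "canonical_hypergroup m f z" "length xs = m" "i < m"
  shows "\<exists>y. a \<in> f (xs[i := y])"
proof -
  have "nary_reproducible m f UNIV"
    using assms(1) unfolding canonical_hypergroup_def nary_hypergroup_def by blast
  then show ?thesis using nary_reproducibleD[of m f UNIV xs i a] assms(2,3) by blast
qed

lemma canonical_hypergroup_cancel:
  assumes "canonical_hypergroup m f z"
    and closed: "\<And>xs. length xs = m \<Longrightarrow> set xs \<subseteq> N \<Longrightarrow> f xs \<subseteq> N"
    and hinv_closed: "\<And>x. x \<in> N \<Longrightarrow> hinv m f z x \<in> N"
    and xs: "length xs = m" "set xs \<subseteq> N" "i < m"
    and a: "a \<in> f (xs[i := y])" "a \<in> N"
  shows "y \<in> N"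
proof -
  let ?ws = "a # map (hinv m f z) (take i xs @ drop (Suc i) xs)"
  have "\<And>x ws j. length ws = m \<Longrightarrow> x \<in> f ws \<Longrightarrow> j < m \<Longrightarrow>
      ws ! j \<in> f (x # map (hinv m f z) (take j ws @ drop (Suc j) ws))"
    using assms(1) unfolding canonical_hypergroup_def by blast
  from this[of "xs[i := y]" a i] have "y \<in> f ?ws" using xs a(1) by simp
  moreover have "length ?ws = m" using xs by simp
  moreover have "set ?ws \<subseteq> N"
    using xs hinv_closed a(2) by (auto dest: in_set_takeD in_set_dropD)
  ultimately show ?thesis using closed by blast
qed

lemma hypermodule_canonical_hypergroup:
  "hypermodule m n f' g' z' one f g z \<Longrightarrow> canonical_hypergroup m f z"
  unfolding hypermodule_def by blast

lemma hypermodule_zero_scalar: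
  "hypermodule m n f' g' z' one f g z \<Longrightarrow> length rs = n - 1 \<Longrightarrow> i < n - 1 \<Longrightarrow>
    g (rs[i := z']) x = {z}"
  unfolding hypermodule_def by blast

lemma hypermodule_replicate_zero_scalar:
  assumes "hypermodule m n f' g' z' one f g z" "n \<ge> 2"
  shows "g (replicate (n - 1) z') x = {z}"
proof -
  have "(replicate (n - 1) z')[0 := z'] = replicate (n - 1) z'"
    using assms(2) by (simp add: list_update_same_conv)
  then show ?thesis
    using hypermodule_zero_scalar[OF assms(1), of "replicate (n - 1) z'" 0] assms(2) by simp
qed

lemma subhypermodule_hyperop_closed:
  "subhypermodule m n f g N \<Longrightarrow> length xs = m \<Longrightarrow> set xs \<subseteq> N \<Longrightarrow> f xs \<subseteq> N"
  unfolding subhypermodule_def by blast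

lemma subhypermodule_scalar_closed:
  "subhypermodule m n f g N \<Longrightarrow> length rs = n - 1 \<Longrightarrow> a \<in> N \<Longrightarrow> g rs a \<subseteq> N"
  unfolding subhypermodule_def by blast

lemma subhypermodule_reproducible:
  "subhypermodule m n f g N \<Longrightarrow> nary_reproducible m f N"
  unfolding subhypermodule_def by blast

lemma subhypermoduleI:
  assumes "N \<noteq> {}"
    and closed: "\<And>xs. length xs = m \<Longrightarrow> set xs \<subseteq> N \<Longrightarrow> f xs \<subseteq> N"
    and solvable: "\<And>xs i a. length xs = m \<Longrightarrow> set xs \<subseteq> N \<Longrightarrow> i < m \<Longrightarrow> a \<in> N \<Longrightarrow>
      \<exists>y\<in>N. a \<in> f (xs[i := y])"
    and "\<And>rs a. length rs = n - 1 \<Longrightarrow> a \<in> N \<Longrightarrow> g rs a \<subseteq> N"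
  shows "subhypermodule m n f g N"
  unfolding subhypermodule_def using assms nary_reproducibleI[OF closed solvable] by blast

lemma subhypermodule_zero_mem:
  assumes "hypermodule m n f' g' z' one f g z" "n \<ge> 2" "subhypermodule m n f g N"
  shows "z \<in> N"
proof -
  obtain x where "x \<in> N" using assms(3) unfolding subhypermodule_def by blast
  then have "g (replicate (n - 1) z') x \<subseteq> N" using subhypermodule_scalar_closed[OF assms(3)] by simp
  then show ?thesis using hypermodule_replicate_zero_scalar[OF assms(1,2)] by simp
qed

lemma subhypermodule_hinv_mem:
  assumes "hypermodule m n f' g' z' one f g z" "m \<ge> 2" "n \<ge> 2" "subhypermodule m n f g N"
    and "x \<in> N"
  shows "hinv m f z x \<in> N"
proof -
  have "z \<in> N" using subhypermodule_zero_mem[OF assms(1,3,4)] .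
  then obtain y where "y \<in> N" "z \<in> f ((x # replicate (m - 1) z)[1 := y])"
    using nary_reproducibleD[OF subhypermodule_reproducible[OF assms(4)], of "x # replicate (m - 1) z" 1 z]
      assms(2,5) by auto
  moreover have "(x # replicate (m - 1) z)[1 := y] = x # y # replicate (m - 2) z"
  proof -
    obtain k where "m = Suc (Suc k)" using assms(2) by (metis add_2_eq_Suc le_Suc_ex)
    then show ?thesis by simp
  qed
  ultimately show ?thesis
    using canonical_hypergroup_hinv_unique[OF hypermodule_canonical_hypergroup[OF assms(1)]] by simp
qed

lemma subhypermodule_cancel:
  assumes "hypermodule m n f' g' z' one f g z" "m \<ge> 2" "n \<ge> 2" "subhypermodule m n f g N"
    and "length xs = m" "set xs \<subseteq> N" "i < m" "a \<in> f (xs[i := y])" "a \<in> N"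
  shows "y \<in> N"
  using canonical_hypergroup_cancel[OF hypermodule_canonical_hypergroup[OF assms(1)]
      subhypermodule_hyperop_closed[OF assms(4)] subhypermodule_hinv_mem[OF assms(1-4)]]
    assms(5-) by blast

lemma hm_homomorphism_hyperop:
  "hm_homomorphism m n f1 g1 f2 g2 h \<Longrightarrow> length xs = m \<Longrightarrow> h ` f1 xs = f2 (map h xs)"
  unfolding hm_homomorphism_def by blast

lemma hm_homomorphism_scalar:
  "hm_homomorphism m n f1 g1 f2 g2 h \<Longrightarrow> length rs = n - 1 \<Longrightarrow> h ` g1 rs a = g2 rs (h a)"
  unfolding hm_homomorphism_def by blast

lemma hm_homomorphism_zero:
  assumes "hypermodule m n f' g' z' one f1 g1 z1" "hypermodule m n f' g' z' one f2 g2 z2"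
    and "hm_homomorphism m n f1 g1 f2 g2 h" "n \<ge> 2"
  shows "h z1 = z2"
proof -
  have "h ` g1 (replicate (n - 1) z') z1 = g2 (replicate (n - 1) z') (h z1)"
    by (rule hm_homomorphism_scalar[OF assms(3)]) simp
  then show ?thesis
    unfolding hypermodule_replicate_zero_scalar[OF assms(1,4)]
      hypermodule_replicate_zero_scalar[OF assms(2,4)] by simp
qed

lemma hm_homomorphism_hinv:
  assumes "hypermodule m n f' g' z' one f1 g1 z1" "hypermodule m n f' g' z' one f2 g2 z2"
    and "hm_homomorphism m n f1 g1 f2 g2 h" "m \<ge> 2" "n \<ge> 2"
  shows "h (hinv m f1 z1 x) = hinv m f2 z2 (h x)"
proof -
  let ?xs = "x # hinv m f1 z1 x # replicate (m - 2) z1"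
  have "h z1 \<in> h ` f1 ?xs"
    using canonical_hypergroup_hinv[OF hypermodule_canonical_hypergroup[OF assms(1)]] by blast
  also have "\<dots> = f2 (map h ?xs)" using hm_homomorphism_hyperop[OF assms(3)] assms(4) by simp
  finally have "z2 \<in> f2 (h x # h (hinv m f1 z1 x) # replicate (m - 2) z2)"
    using hm_homomorphism_zero[OF assms(1-3,5)] by simp
  then show ?thesis
    by (rule canonical_hypergroup_hinv_unique[OF hypermodule_canonical_hypergroup[OF assms(2)]])
qed

lemma hm_homomorphism_vimage_image_eq:
  assumes "hypermodule m n f' g' z' one f1 g1 z1" "hypermodule m n f' g' z' one f2 g2 z2"
    and "hm_homomorphism m n f1 g1 f2 g2 h" "m \<ge> 2" "n \<ge> 2"
    and "subhypermodule m n f1 g1 Q" "Ker h z2 \<subseteq> Q"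
  shows "h -` h ` Q = Q"
proof (intro equalityI subsetI)
  fix c assume "c \<in> h -` h ` Q"
  then obtain q where q: "q \<in> Q" "h c = h q" by blast
  let ?xs = "q # hinv m f1 z1 q # replicate (m - 2) z1"
  have xs: "length ?xs = m" "set ?xs \<subseteq> Q"
    using assms(4) q(1) subhypermodule_hinv_mem[OF assms(1,4,5,6)]
      subhypermodule_zero_mem[OF assms(1,5,6)] by auto
  have "z2 \<in> f2 (h q # hinv m f2 z2 (h q) # replicate (m - 2) z2)"
    by (rule canonical_hypergroup_hinv[OF hypermodule_canonical_hypergroup[OF assms(2)]])
  also have "\<dots> = f2 (map h (?xs[0 := c]))"
    using q(2) hm_homomorphism_zero[OF assms(1-3,5)] hm_homomorphism_hinv[OF assms(1-5)] by simp
  also have "\<dots> = h ` f1 (?xs[0 := c])"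
    using hm_homomorphism_hyperop[OF assms(3)] xs(1) by simp
  finally obtain d where d: "d \<in> f1 (?xs[0 := c])" "d \<in> Ker h z2" unfolding Ker_def by blast
  show "c \<in> Q"
    using subhypermodule_cancel[OF assms(1,4,5,6) xs, of 0 d c] d assms(4,7) by auto
qed blast

lemma subhypermodule_vimage:
  assumes "hypermodule m n f' g' z' one f1 g1 z1" "hypermodule m n f' g' z' one f2 g2 z2"
    and "hm_homomorphism m n f1 g1 f2 g2 h" "m \<ge> 2" "n \<ge> 2"
    and "subhypermodule m n f2 g2 Q"
  shows "subhypermodule m n f1 g1 (h -` Q)"
proof (rule subhypermoduleI)
  show "h -` Q \<noteq> {}"
    using hm_homomorphism_zero[OF assms(1-3,5)] subhypermodule_zero_mem[OF assms(2,5,6)] by blast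
  show "f1 xs \<subseteq> h -` Q" if xs: "length xs = m" "set xs \<subseteq> h -` Q" for xs
  proof -
    have "h ` f1 xs = f2 (map h xs)" by (rule hm_homomorphism_hyperop[OF assms(3) xs(1)])
    also have "\<dots> \<subseteq> Q" using subhypermodule_hyperop_closed[OF assms(6), of "map h xs"] xs by auto
    finally show ?thesis by blast
  qed
  show "\<exists>y\<in>h -` Q. a \<in> f1 (xs[i := y])"
    if xs: "length xs = m" "set xs \<subseteq> h -` Q" "i < m" and a: "a \<in> h -` Q" for xs i a
  proof -
    obtain y where y: "a \<in> f1 (xs[i := y])"
      using canonical_hypergroup_solvable[OF hypermodule_canonical_hypergroup[OF assms(1)] xs(1,3)] ..
    have "h a \<in> h ` f1 (xs[i := y])" using y by blast
    also have "\<dots> = f2 ((map h xs)[i := h y])"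
      using hm_homomorphism_hyperop[OF assms(3)] xs(1) by (simp add: map_update)
    finally have "h y \<in> Q"
      using subhypermodule_cancel[OF assms(2,4,5,6), of "map h xs" i "h a" "h y"] xs a by auto
    then show ?thesis using y by blast
  qed
  show "g1 rs a \<subseteq> h -` Q" if "length rs = n - 1" "a \<in> h -` Q" for rs a
    using that hm_homomorphism_scalar[OF assms(3) that(1)] subhypermodule_scalar_closed[OF assms(6) that(1)]
    by blast
qed

lemma subhypermodule_image:
  assumes "hm_homomorphism m n f1 g1 f2 g2 h" "subhypermodule m n f1 g1 Q"
  shows "subhypermodule m n f2 g2 (h ` Q)"
proof (rule subhypermoduleI)
  have lift: "\<exists>ys. set ys \<subseteq> Q \<and> xs = map h ys" if "set xs \<subseteq> h ` Q" for xs
  proof -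
    have "xs \<in> map h ` lists Q" unfolding lists_image[symmetric] using that by blast
    then show ?thesis by (auto simp: lists_eq_set)
  qed
  show "h ` Q \<noteq> {}" using assms(2) unfolding subhypermodule_def by blast
  show "f2 xs \<subseteq> h ` Q" if xs: "length xs = m" "set xs \<subseteq> h ` Q" for xs
  proof -
    obtain ys where ys: "set ys \<subseteq> Q" "xs = map h ys" using lift xs(2) by blast
    then have "f2 xs = h ` f1 ys" using hm_homomorphism_hyperop[OF assms(1)] xs(1) by simp
    then show ?thesis using subhypermodule_hyperop_closed[OF assms(2)] ys xs(1) by auto
  qed
  show "\<exists>y\<in>h ` Q. b \<in> f2 (xs[i := y])"
    if xs: "length xs = m" "set xs \<subseteq> h ` Q" "i < m" and "b \<in> h ` Q" for xs i b
  proof -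
    obtain a where a: "a \<in> Q" "b = h a" using \<open>b \<in> h ` Q\<close> by blast
    obtain ys where ys: "set ys \<subseteq> Q" "xs = map h ys" using lift xs(2) by blast
    obtain y where y: "y \<in> Q" "a \<in> f1 (ys[i := y])"
      using nary_reproducibleD[OF subhypermodule_reproducible[OF assms(2)], of ys i a] ys xs a(1)
      by auto
    have "b \<in> h ` f1 (ys[i := y])" using y a by blast
    also have "\<dots> = f2 (xs[i := h y])"
      using hm_homomorphism_hyperop[OF assms(1)] ys xs(1) by (simp add: map_update)
    finally show ?thesis using y(1) by blast
  qed
  show "g2 rs b \<subseteq> h ` Q" if rs: "length rs = n - 1" and "b \<in> h ` Q" for rs b
  proof -
    obtain a where a: "a \<in> Q" "b = h a" using \<open>b \<in> h ` Q\<close> by blast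
    then have "g2 rs b = h ` g1 rs a" using hm_homomorphism_scalar[OF assms(1) rs] by simp
    then show ?thesis using subhypermodule_scalar_closed[OF assms(2) rs a(1)] by blast
  qed
qed

lemma phi_classical_primeI:
  assumes "subhypermodule m n f g Q" "Q \<noteq> UNIV"
    and "\<And>rs a. length rs = n - 1 \<Longrightarrow> g rs a \<subseteq> Q - \<phi> Q \<Longrightarrow>
      \<exists>i < n - 1. g ((rs ! i) # replicate (n - 2) one) a \<subseteq> Q"
  shows "phi_classical_prime m n one f g \<phi> Q"
  using assms unfolding phi_classical_prime_def by blast

lemma phi_classical_prime_vimage:
  assumes M1: "hypermodule m n f' g' z' one f1 g1 z1" and M2: "hypermodule m n f' g' z' one f2 g2 z2"
    and epi: "hm_epimorphism m n f1 g1 f2 g2 h" and "m \<ge> 2" "n \<ge> 2"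
    and prime: "phi_classical_prime m n one f2 g2 \<phi>2 Q"
    and \<phi>: "\<phi>1 (h -` Q) = h -` \<phi>2 Q"
  shows "phi_classical_prime m n one f1 g1 \<phi>1 (h -` Q)"
proof (rule phi_classical_primeI)
  have hom: "hm_homomorphism m n f1 g1 f2 g2 h" and "surj h"
    using epi unfolding hm_epimorphism_def by blast+
  have sub: "subhypermodule m n f2 g2 Q" and "Q \<noteq> UNIV"
    and prime_cond: "\<And>rs b. length rs = n - 1 \<Longrightarrow> g2 rs b \<subseteq> Q - \<phi>2 Q \<Longrightarrow>
      \<exists>i < n - 1. g2 ((rs ! i) # replicate (n - 2) one) b \<subseteq> Q"
    using prime unfolding phi_classical_prime_def by blast+
  show "subhypermodule m n f1 g1 (h -` Q)" by (rule subhypermodule_vimage[OF M1 M2 hom assms(4,5) sub])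
  show "h -` Q \<noteq> UNIV"
  proof
    assume "h -` Q = UNIV"
    then have "range h \<subseteq> Q" by blast
    then show False using \<open>surj h\<close> \<open>Q \<noteq> UNIV\<close> by auto
  qed
  show "\<exists>i < n - 1. g1 ((rs ! i) # replicate (n - 2) one) a \<subseteq> h -` Q"
    if rs: "length rs = n - 1" and a: "g1 rs a \<subseteq> h -` Q - \<phi>1 (h -` Q)" for rs a
  proof -
    have "g2 rs (h a) = h ` g1 rs a" using hm_homomorphism_scalar[OF hom rs] by simp
    also have "\<dots> \<subseteq> Q - \<phi>2 Q" using a \<phi> by auto
    finally obtain i where i: "i < n - 1" "g2 ((rs ! i) # replicate (n - 2) one) (h a) \<subseteq> Q"
      using prime_cond rs by blast
    have "h ` g1 ((rs ! i) # replicate (n - 2) one) a = g2 ((rs ! i) # replicate (n - 2) one) (h a)"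
      by (rule hm_homomorphism_scalar[OF hom]) (use \<open>n \<ge> 2\<close> in simp)
    then show ?thesis using i by blast
  qed
qed

lemma phi_classical_prime_image:
  assumes M1: "hypermodule m n f' g' z' one f1 g1 z1" and M2: "hypermodule m n f' g' z' one f2 g2 z2"
    and epi: "hm_epimorphism m n f1 g1 f2 g2 h" and "m \<ge> 2" "n \<ge> 2"
    and prime: "phi_classical_prime m n one f1 g1 \<phi>1 Q"
    and ker: "Ker h z2 \<subseteq> Q"
    and \<phi>: "\<phi>2 (h ` Q) = h ` \<phi>1 Q"
  shows "phi_classical_prime m n one f2 g2 \<phi>2 (h ` Q)"
proof (rule phi_classical_primeI)
  have hom: "hm_homomorphism m n f1 g1 f2 g2 h" and "surj h"
    using epi unfolding hm_epimorphism_def by blast+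
  have sub: "subhypermodule m n f1 g1 Q" and "Q \<noteq> UNIV"
    and prime_cond: "\<And>rs a. length rs = n - 1 \<Longrightarrow> g1 rs a \<subseteq> Q - \<phi>1 Q \<Longrightarrow>
      \<exists>i < n - 1. g1 ((rs ! i) # replicate (n - 2) one) a \<subseteq> Q"
    using prime unfolding phi_classical_prime_def by blast+
  have saturated: "h -` h ` Q = Q"
    by (rule hm_homomorphism_vimage_image_eq[OF M1 M2 hom assms(4,5) sub ker])
  show "subhypermodule m n f2 g2 (h ` Q)" by (rule subhypermodule_image[OF hom sub])
  show "h ` Q \<noteq> UNIV" using saturated \<open>Q \<noteq> UNIV\<close> by auto
  show "\<exists>i < n - 1. g2 ((rs ! i) # replicate (n - 2) one) b \<subseteq> h ` Q"
    if rs: "length rs = n - 1" and b: "g2 rs b \<subseteq> h ` Q - \<phi>2 (h ` Q)" for rs b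
  proof -
    obtain a where a: "b = h a" using \<open>surj h\<close> by (metis surjD)
    have "h ` g1 rs a \<subseteq> h ` Q - h ` \<phi>1 Q"
      using b \<phi> a hm_homomorphism_scalar[OF hom rs] by simp
    then have "g1 rs a \<subseteq> h -` h ` Q - \<phi>1 Q" by blast
    then obtain i where i: "i < n - 1" "g1 ((rs ! i) # replicate (n - 2) one) a \<subseteq> Q"
      using prime_cond[OF rs] unfolding saturated by blast
    have "h ` g1 ((rs ! i) # replicate (n - 2) one) a = g2 ((rs ! i) # replicate (n - 2) one) b"
      unfolding a by (rule hm_homomorphism_scalar[OF hom]) (use \<open>n \<ge> 2\<close> in simp)
    then show ?thesis using i by blast
  qed
qed

theorem mainTheorem13:
  fixes m n :: nat
    and f' :: "'r list \<Rightarrow> 'r set" and g' :: "'r list \<Rightarrow> 'r" and z' one :: 'r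
    and f1 :: "'a list \<Rightarrow> 'a set" and g1 :: "'r list \<Rightarrow> 'a \<Rightarrow> 'a set" and z1 :: 'a
    and f2 :: "'b list \<Rightarrow> 'b set" and g2 :: "'r list \<Rightarrow> 'b \<Rightarrow> 'b set" and z2 :: 'b
    and h :: "'a \<Rightarrow> 'b"
    and \<phi>1 :: "'a set \<Rightarrow> 'a set" and \<phi>2 :: "'b set \<Rightarrow> 'b set"
  assumes "m \<ge> 2" and "n \<ge> 2"
    and "krasner_hyperring m n f' g' z' one"
    and "hypermodule m n f' g' z' one f1 g1 z1"
    and "hypermodule m n f' g' z' one f2 g2 z2"
    and "hm_epimorphism m n f1 g1 f2 g2 h"
    and "phi_function m n f1 g1 \<phi>1"
    and "phi_function m n f2 g2 \<phi>2"
  shows "(\<forall>Q2. phi_classical_prime m n one f2 g2 \<phi>2 Q2 \<and> \<phi>1 (h -` Q2) = h -` (\<phi>2 Q2)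
              \<longrightarrow> phi_classical_prime m n one f1 g1 \<phi>1 (h -` Q2))
       \<and> (\<forall>Q1. phi_classical_prime m n one f1 g1 \<phi>1 Q1 \<and> Ker h z2 \<subseteq> Q1
              \<and> \<phi>2 (h ` Q1) = h ` (\<phi>1 Q1)
              \<longrightarrow> phi_classical_prime m n one f2 g2 \<phi>2 (h ` Q1))"
proof (intro conjI allI impI)
  fix Q2 assume "phi_classical_prime m n one f2 g2 \<phi>2 Q2 \<and> \<phi>1 (h -` Q2) = h -` (\<phi>2 Q2)"
  then show "phi_classical_prime m n one f1 g1 \<phi>1 (h -` Q2)"
    by (elim conjE) (rule phi_classical_prime_vimage[OF assms(4-6,1,2)])
next
  fix Q1 assume "phi_classical_prime m n one f1 g1 \<phi>1 Q1 \<and> Ker h z2 \<subseteq> Q1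
    \<and> \<phi>2 (h ` Q1) = h ` (\<phi>1 Q1)"
  then show "phi_classical_prime m n one f2 g2 \<phi>2 (h ` Q1)"
    by (elim conjE) (rule phi_classical_prime_image[OF assms(4-6,1,2)])
qed

end
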